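(* Let $F$ be a degree $d$ finite separable extension of the nonarchimedean local field $Q$, $H$ a connected reductive group over $F$, $S$ a maximal torus of $H$, $T=\mathrm{R}_{F/Q}S$, $G=\mathrm{R}_{F/Q}H$, and let $\mu\in X^+_*(T)$. Then there exists an enumeration of representatives for $W_Q/W_F$ in $W_Q$ such that, under the resulting identification $W^{\mathrm{plec}}_{F/Q}\cong W_F^d\rtimes\mathfrak S_d$, the stabilizer $W^{[\mu]}_{F/Q}$ of $\mu$ corresponds to $\prod_{j=1}^kW_{F_j}^{\delta_j}\rtimes\mathfrak S_{\delta_j}$ for some partition $\delta_1,\dots,\delta_k$ of $\{1,\dots,d\}$ and some finite separable extensions $F_1,\dots,F_k$ of $F$.
   Context: $X_*^+(T)$ (resp. $X^+_*(S)$) denotes dominant cocharacters, identified with conjugacy classes of cocharacters of $G_{\bar Q}$ (resp. $H_{\bar Q}$), with their $W_Q$- (resp. $W_F$-)actions; $X_*^+(T)$ is the $W_Q$-set induced from the $W_F$-set $X_*^+(S)$, i.e. functions $f:W_Q\to X_*^+(S)$ with $f(gh)=h^{-1}f(g)$ for $h\in W_F$. The plectic Weil group $W^{\mathrm{plec}}_{F/Q}$ is the group of bijections of $W_Q$ commuting with right multiplication by $W_F$; it contains $W_Q$ (left multiplication) and acts on $X_*^+(T)$ by $(\alpha f)(g)=f(\alpha^{-1}g)$, extending the $W_Q$-action. An enumeration $g_1,\dots,g_d$ of representatives of $W_Q/W_F$ identifies $W^{\mathrm{plec}}_{F/Q}$ with $W_F^d\rtimes\mathfrak S_d$ and $X_*^+(T)$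 with $X_*^+(S)^d$ compatibly with the natural action. $W_{F_j}\subseteq W_F$ is the Weil group of $F_j$. *)

theory Defs
  imports "HOL-Algebra.Group_Action" "HOL-Algebra.Coset"
begin

text \<open>Abstract group-theoretic model. G plays the role of the Weil group W_Q,
K the subgroup W_F (finite index d), X the W_F-set of dominant cocharacters of S.\<close>

definition plectic :: "('a, 'b) monoid_scheme \<Rightarrow> 'a set \<Rightarrow> ('a \<Rightarrow> 'a) set" where
  "plectic G K = {\<alpha>. bij_betw \<alpha> (carrier G) (carrier G) \<and>
      (\<forall>g\<in>carrier G. \<forall>h\<in>K. \<alpha> (g \<otimes>\<^bsub>G\<^esub> h) = \<alpha> g \<otimes>\<^bsub>G\<^esub> h)}"

definition induced_set ::
  "('a, 'b) monoid_scheme \<Rightarrow> 'a set \<Rightarrow> ('a \<Rightarrow> 'x \<Rightarrow> 'x) \<Rightarrow> 'x set \<Rightarrow> ('a \<Rightarrow> 'x) set" where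
  "induced_set G K act X = {f. (\<forall>g\<in>carrier G. f g \<in> X) \<and>
      (\<forall>g\<in>carrier G. \<forall>h\<in>K. f (g \<otimes>\<^bsub>G\<^esub> h) = act (inv\<^bsub>G\<^esub> h) (f g))}"

definition plec_act :: "('a, 'b) monoid_scheme \<Rightarrow> ('a \<Rightarrow> 'a) \<Rightarrow> ('a \<Rightarrow> 'x) \<Rightarrow> ('a \<Rightarrow> 'x)" where
  "plec_act G \<alpha> f = (\<lambda>g. f (inv_into (carrier G) \<alpha> g))"

definition plec_stab ::
  "('a, 'b) monoid_scheme \<Rightarrow> 'a set \<Rightarrow> ('a \<Rightarrow> 'x) \<Rightarrow> ('a \<Rightarrow> 'a) set" where
  "plec_stab G K \<mu> = {\<alpha> \<in> plectic G K. \<forall>g\<in>carrier G. plec_act G \<alpha> \<mu> g = \<mu> g}"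

definition coset_enum :: "('a, 'b) monoid_scheme \<Rightarrow> 'a set \<Rightarrow> nat \<Rightarrow> (nat \<Rightarrow> 'a) \<Rightarrow> bool" where
  "coset_enum G K d g \<longleftrightarrow> (\<forall>i<d. g i \<in> carrier G) \<and>
      (\<forall>i<d. \<forall>j<d. g i <#\<^bsub>G\<^esub> K = g j <#\<^bsub>G\<^esub> K \<longrightarrow> i = j) \<and>
      (\<forall>x\<in>carrier G. \<exists>i<d. x \<in> g i <#\<^bsub>G\<^esub> K)"

end

theory Submission
  imports Defs
begin

text \<open>
  Since mu(a h) = h^-1 mu(a), moving a coset
  representative inside its coset a K moves mu(a) through its whole K-orbit; so the representatives
  g_i can be chosen such that each mu(g_i) is a fixed chosen point of its orbit. Then two values
  mu(g_i), mu(g_i') in the same orbit are equal. A plectic alpha fixes mu iff mu o alpha = mu, and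
  writing alpha(g_i) = g_i' h this says exactly: mu(g_i') = mu(g_i) and h stabilises mu(g_i).
  Grouping the indices i by the value of mu(g_i) gives the blocks delta_j, and W_j is the stabiliser
  of the common value, which contains N because N acts trivially.
\<close>

lemma plec_stab_iff:
  assumes "\<alpha> \<in> plectic G K"
  shows "\<alpha> \<in> plec_stab G K \<mu> \<longleftrightarrow> (\<forall>a\<in>carrier G. \<mu> (\<alpha> a) = \<mu> a)"
proof -
  have bij: "bij_betw \<alpha> (carrier G) (carrier G)"
    using assms unfolding plectic_def by blast
  have "(\<forall>b\<in>carrier G. \<mu> (inv_into (carrier G) \<alpha> b) = \<mu> b) \<longleftrightarrow> (\<forall>a\<in>carrier G. \<mu> (\<alpha> a) = \<mu> a)"
  proof
    assume fixed: "\<forall>b\<in>carrier G. \<mu> (inv_into (carrier G) \<alpha> b) = \<mu> b"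
    show "\<forall>a\<in>carrier G. \<mu> (\<alpha> a) = \<mu> a"
    proof
      fix a assume a: "a \<in> carrier G"
      have "\<mu> (inv_into (carrier G) \<alpha> (\<alpha> a)) = \<mu> (\<alpha> a)"
        using fixed bij_betw_apply[OF bij a] by blast
      then show "\<mu> (\<alpha> a) = \<mu> a"
        using bij_betw_inv_into_left[OF bij a] by simp
    qed
  next
    assume fixed: "\<forall>a\<in>carrier G. \<mu> (\<alpha> a) = \<mu> a"
    show "\<forall>b\<in>carrier G. \<mu> (inv_into (carrier G) \<alpha> b) = \<mu> b"
    proof
      fix b assume b: "b \<in> carrier G"
      have "\<mu> (\<alpha> (inv_into (carrier G) \<alpha> b)) = \<mu> (inv_into (carrier G) \<alpha> b)"
        using fixed bij_betw_apply[OF bij_betw_inv_into[OF bij] b] by blast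
      then show "\<mu> (inv_into (carrier G) \<alpha> b) = \<mu> b"
        using bij_betw_inv_into_right[OF bij b] by simp
    qed
  qed
  then show ?thesis
    using assms unfolding plec_stab_def plec_act_def by blast
qed

lemma coset_enum_decompose:
  assumes "coset_enum G K d g" and "a \<in> carrier G"
  shows "\<exists>i<d. \<exists>h\<in>K. a = g i \<otimes>\<^bsub>G\<^esub> h"
  using assms unfolding coset_enum_def l_coset_def by blast

lemma (in group) coset_enum_exists:
  assumes K: "subgroup K G"
    and fin: "finite ((\<lambda>a. a <# K) ` carrier G)"
    and d: "d = card ((\<lambda>a. a <# K) ` carrier G)"
    and meets: "\<forall>a\<in>carrier G. \<exists>b\<in>R. b \<in> a <# K"
  shows "\<exists>g. coset_enum G K d g \<and> (\<forall>i<d. g i \<in> R)"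
proof -
  obtain e where e: "bij_betw e {..<d} ((\<lambda>a. a <# K) ` carrier G)"
    using ex_bij_betw_nat_finite[OF fin] d by (auto simp: atLeast0LessThan)
  have "\<forall>i\<in>{..<d}. \<exists>b. b \<in> R \<and> b \<in> carrier G \<and> b <# K = e i"
  proof
    fix i assume "i \<in> {..<d}"
    then have "e i \<in> (\<lambda>a. a <# K) ` carrier G"
      using bij_betw_apply[OF e] by blast
    then obtain a where a: "a \<in> carrier G" "e i = a <# K"
      by blast
    with meets obtain b where b: "b \<in> R" "b \<in> a <# K"
      by blast
    have "b \<in> carrier G"
      using l_coset_carrier[OF b(2) a(1) K] .
    moreover have "b <# K = e i"
      using l_repr_independence[OF b(2) a(1) K] a(2) by simp
    ultimately show "\<exists>b. b \<in> R \<and> b \<in> carrier G \<and> b <# K = e i"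
      using b(1) by blast
  qed
  from bchoice[OF this] obtain g
    where g: "\<forall>i\<in>{..<d}. g i \<in> R \<and> g i \<in> carrier G \<and> g i <# K = e i"
    by blast
  have "coset_enum G K d g"
    unfolding coset_enum_def
  proof (intro conjI allI ballI impI)
    show "g i \<in> carrier G" if "i < d" for i
      using g that by simp
    show "i = j" if "i < d" "j < d" "g i <# K = g j <# K" for i j
      using g that e unfolding bij_betw_def inj_on_def by simp
    fix x assume x: "x \<in> carrier G"
    then have "x <# K \<in> e ` {..<d}"
      using e unfolding bij_betw_def by blast
    then obtain i where i: "i < d" "x <# K = e i"
      by blast
    moreover have "x \<in> x <# K"
      using x subgroup.one_closed[OF K] unfolding l_coset_def by force
    ultimately show "\<exists>i<d. x \<in> g i <# K"
      using g by auto
  qed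
  then show ?thesis
    using g by auto
qed

lemma fibres_of_enumeration:
  assumes f: "bij_betw f {..<k} (v ` A)"
  defines "\<delta> j \<equiv> {i \<in> A. v i = f j}"
  shows "\<forall>j<k. \<delta> j \<noteq> {}"
    and "\<forall>j<k. \<forall>j'<k. j \<noteq> j' \<longrightarrow> \<delta> j \<inter> \<delta> j' = {}"
    and "(\<Union>j<k. \<delta> j) = A"
    and "(\<forall>i\<in>A. P i (v i)) \<longleftrightarrow> (\<forall>j<k. \<forall>i\<in>\<delta> j. P i (f j))"
proof -
  have onto: "\<And>i. i \<in> A \<Longrightarrow> \<exists>j<k. v i = f j"
    using f unfolding bij_betw_def by (metis imageE imageI lessThan_iff)
  show "\<forall>j<k. \<delta> j \<noteq> {}"
    using bij_betw_apply[OF f] unfolding \<delta>_def by fastforce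
  show "\<forall>j<k. \<forall>j'<k. j \<noteq> j' \<longrightarrow> \<delta> j \<inter> \<delta> j' = {}"
    using f unfolding bij_betw_def inj_on_def \<delta>_def by auto
  show "(\<Union>j<k. \<delta> j) = A"
    using onto unfolding \<delta>_def by auto
  show "(\<forall>i\<in>A. P i (v i)) \<longleftrightarrow> (\<forall>j<k. \<forall>i\<in>\<delta> j. P i (f j))"
    using onto unfolding \<delta>_def by fastforce
qed

locale induced_action = group G + K: subgroup K G
  for G (structure) and K :: "'a set" +
  fixes X :: "'x set" and act :: "'a \<Rightarrow> 'x \<Rightarrow> 'x" and \<mu> :: "'a \<Rightarrow> 'x"
  assumes action: "group_action (G\<lparr>carrier := K\<rparr>) X act"
    and induced: "\<mu> \<in> induced_set G K act X"
begin

lemma induced_closed: "a \<in> carrier G \<Longrightarrow> \<mu> a \<in> X"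
  using induced unfolding induced_set_def by blast

lemma induced_mult: "a \<in> carrier G \<Longrightarrow> h \<in> K \<Longrightarrow> \<mu> (a \<otimes> h) = act (inv h) (\<mu> a)"
  using induced unfolding induced_set_def by blast

lemma act_mult: "h \<in> K \<Longrightarrow> k \<in> K \<Longrightarrow> x \<in> X \<Longrightarrow> act (h \<otimes> k) x = act h (act k x)"
  using group_action.composition_rule[OF action] by simp

lemma act_inv_fixed_iff: "h \<in> K \<Longrightarrow> x \<in> X \<Longrightarrow> act (inv h) x = x \<longleftrightarrow> act h x = x"
  using group_action.orbit_sym_aux[OF action, of h x x] group_action.orbit_sym_aux[OF action, of "inv h" x x]
    K.subgroup_axioms by auto

lemma orbit_act:
  assumes x: "x \<in> X" and h: "h \<in> K"
  shows "orbit (G\<lparr>carrier := K\<rparr>) act (act h x) = orbit (G\<lparr>carrier := K\<rparr>) act x"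
proof -
  interpret A: group_action "G\<lparr>carrier := K\<rparr>" X act by (fact action)
  have y: "act h x \<in> X" "act h x \<in> orbit (G\<lparr>carrier := K\<rparr>) act x"
    using A.element_image[of h x] x h unfolding orbit_def by auto
  have closed: "\<And>x y. x \<in> X \<Longrightarrow> y \<in> orbit (G\<lparr>carrier := K\<rparr>) act x \<Longrightarrow> y \<in> X"
    unfolding orbit_def using A.element_image by auto
  show ?thesis
  proof
    show "orbit (G\<lparr>carrier := K\<rparr>) act (act h x) \<subseteq> orbit (G\<lparr>carrier := K\<rparr>) act x"
      using A.orbit_trans[OF x y(1) _ y(2)] closed[OF y(1)] by blast
    have "x \<in> orbit (G\<lparr>carrier := K\<rparr>) act (act h x)"
      using A.orbit_sym[OF x y(1) y(2)] .
    then show "orbit (G\<lparr>carrier := K\<rparr>) act x \<subseteq> orbit (G\<lparr>carrier := K\<rparr>) act (act h x)"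
      using A.orbit_trans[OF y(1) x] closed[OF x] by blast
  qed
qed

definition orbit_rep :: "'x \<Rightarrow> 'x" where
  "orbit_rep x = (SOME y. y \<in> orbit (G\<lparr>carrier := K\<rparr>) act x)"

lemma orbit_rep_act: "x \<in> X \<Longrightarrow> h \<in> K \<Longrightarrow> orbit_rep (act h x) = orbit_rep x"
  unfolding orbit_rep_def using orbit_act by simp

lemma orbit_rep_obtain:
  assumes "x \<in> X"
  obtains h where "h \<in> K" "orbit_rep x = act h x"
proof -
  have "orbit_rep x \<in> orbit (G\<lparr>carrier := K\<rparr>) act x"
    unfolding orbit_rep_def using group_action.orbit_refl[OF action assms] by (rule someI)
  then show ?thesis
    using that unfolding orbit_def by auto
qed

definition orbit_separated :: "nat \<Rightarrow> (nat \<Rightarrow> 'a) \<Rightarrow> bool" where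
  "orbit_separated d g \<longleftrightarrow>
     (\<forall>i<d. \<forall>i'<d. \<forall>h\<in>K. \<mu> (g i) = act h (\<mu> (g i')) \<longrightarrow> \<mu> (g i) = \<mu> (g i'))"

lemma exists_orbit_separated_coset_enum:
  assumes fin: "finite ((\<lambda>a. a <# K) ` carrier G)"
    and d: "d = card ((\<lambda>a. a <# K) ` carrier G)"
  shows "\<exists>g. coset_enum G K d g \<and> orbit_separated d g"
proof -
  let ?R = "{b \<in> carrier G. orbit_rep (\<mu> b) = \<mu> b}"
  have "\<forall>a\<in>carrier G. \<exists>b\<in>?R. b \<in> a <# K"
  proof
    fix a assume a: "a \<in> carrier G"
    obtain h where h: "h \<in> K" "orbit_rep (\<mu> a) = act h (\<mu> a)"
      using orbit_rep_obtain[OF induced_closed[OF a]] .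
    let ?b = "a \<otimes> inv h"
    have b: "?b \<in> carrier G" "?b \<in> a <# K"
      using a h(1) unfolding l_coset_def by auto
    have "\<mu> ?b = act h (\<mu> a)"
      using induced_mult[OF a K.m_inv_closed[OF h(1)]] h(1) by simp
    then have "orbit_rep (\<mu> ?b) = \<mu> ?b"
      using orbit_rep_act[OF induced_closed[OF a] h(1)] h(2) by simp
    then show "\<exists>b\<in>?R. b \<in> a <# K"
      using b by blast
  qed
  then obtain g where enum: "coset_enum G K d g" and g: "\<forall>i<d. g i \<in> ?R"
    using coset_enum_exists[OF K.subgroup_axioms fin d] by blast
  have "orbit_separated d g"
    unfolding orbit_separated_def
  proof (intro allI impI ballI)
    fix i i' h assume i: "i < d" and i': "i' < d" and h: "h \<in> K"
      and eq: "\<mu> (g i) = act h (\<mu> (g i'))"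
    have "\<mu> (g i) = orbit_rep (\<mu> (g i))"
      using g i by simp
    also have "\<dots> = orbit_rep (act h (\<mu> (g i')))"
      using eq by simp
    also have "\<dots> = orbit_rep (\<mu> (g i'))"
      using orbit_rep_act[OF induced_closed h] g i' by simp
    also have "\<dots> = \<mu> (g i')"
      using g i' by simp
    finally show "\<mu> (g i) = \<mu> (g i')" .
  qed
  with enum show ?thesis
    by blast
qed

lemma fixes_induced_imp_coset_perm:
  assumes enum: "coset_enum G K d g" and sep: "orbit_separated d g"
    and \<alpha>: "\<alpha> \<in> plectic G K" and stable: "\<forall>a\<in>carrier G. \<mu> (\<alpha> a) = \<mu> a"
    and i: "i < d"
  shows "\<exists>i'<d. \<mu> (g i') = \<mu> (g i) \<and>
           (\<exists>h\<in>stabilizer (G\<lparr>carrier := K\<rparr>) act (\<mu> (g i)). \<alpha> (g i) = g i' \<otimes> h)"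
proof -
  have gi: "g i \<in> carrier G"
    using enum i unfolding coset_enum_def by blast
  have "\<alpha> (g i) \<in> carrier G"
    using \<alpha> gi unfolding plectic_def by (blast dest: bij_betw_apply)
  then obtain i' h where i': "i' < d" and h: "h \<in> K" and eq: "\<alpha> (g i) = g i' \<otimes> h"
    using coset_enum_decompose[OF enum] by blast
  have gi': "g i' \<in> carrier G"
    using enum i' unfolding coset_enum_def by blast
  have shifted: "\<mu> (g i) = act (inv h) (\<mu> (g i'))"
    using stable gi eq induced_mult[OF gi' h] by metis
  then have same: "\<mu> (g i') = \<mu> (g i)"
    using sep i i' K.m_inv_closed[OF h] unfolding orbit_separated_def by metis
  then have "act h (\<mu> (g i)) = \<mu> (g i)"
    using act_inv_fixed_iff[OF h induced_closed[OF gi]] shifted by simp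
  then have "h \<in> stabilizer (G\<lparr>carrier := K\<rparr>) act (\<mu> (g i))"
    unfolding stabilizer_def using h by simp
  then show ?thesis
    using i' same eq by blast
qed

lemma coset_perm_imp_fixes_induced:
  assumes enum: "coset_enum G K d g" and \<alpha>: "\<alpha> \<in> plectic G K"
    and perm: "\<forall>i<d. \<exists>i'<d. \<mu> (g i') = \<mu> (g i) \<and>
                 (\<exists>h\<in>stabilizer (G\<lparr>carrier := K\<rparr>) act (\<mu> (g i)). \<alpha> (g i) = g i' \<otimes> h)"
    and a: "a \<in> carrier G"
  shows "\<mu> (\<alpha> a) = \<mu> a"
proof -
  obtain i k where i: "i < d" and k: "k \<in> K" and a_eq: "a = g i \<otimes> k"
    using coset_enum_decompose[OF enum a] by blast
  obtain i' h where i': "i' < d" and same: "\<mu> (g i') = \<mu> (g i)"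
    and h: "h \<in> stabilizer (G\<lparr>carrier := K\<rparr>) act (\<mu> (g i))" and eq: "\<alpha> (g i) = g i' \<otimes> h"
    using perm i by blast
  have hK: "h \<in> K" and h_fix: "act h (\<mu> (g i)) = \<mu> (g i)"
    using h unfolding stabilizer_def by auto
  have gi: "g i \<in> carrier G" and gi': "g i' \<in> carrier G"
    using enum i i' unfolding coset_enum_def by blast+
  have x: "\<mu> (g i) \<in> X"
    using induced_closed[OF gi] .
  have "\<alpha> a = \<alpha> (g i) \<otimes> k"
    using \<alpha> gi k a_eq unfolding plectic_def by blast
  also have "\<dots> = g i' \<otimes> (h \<otimes> k)"
    using eq gi' hK k by (simp add: m_assoc)
  finally have "\<mu> (\<alpha> a) = act (inv (h \<otimes> k)) (\<mu> (g i))"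
    using induced_mult[OF gi' K.m_closed[OF hK k]] same by simp
  also have "\<dots> = act (inv k) (act (inv h) (\<mu> (g i)))"
    using act_mult[OF K.m_inv_closed[OF k] K.m_inv_closed[OF hK] x] hK k by (simp add: inv_mult_group)
  also have "act (inv h) (\<mu> (g i)) = \<mu> (g i)"
    using act_inv_fixed_iff[OF hK x] h_fix by simp
  also have "act (inv k) (\<mu> (g i)) = \<mu> a"
    using induced_mult[OF gi k] a_eq by simp
  finally show ?thesis .
qed

lemma fixes_induced_iff_coset_perm:
  assumes "coset_enum G K d g" and "orbit_separated d g" and "\<alpha> \<in> plectic G K"
  shows "(\<forall>a\<in>carrier G. \<mu> (\<alpha> a) = \<mu> a) \<longleftrightarrow>
         (\<forall>i<d. \<exists>i'<d. \<mu> (g i') = \<mu> (g i) \<and>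
            (\<exists>h\<in>stabilizer (G\<lparr>carrier := K\<rparr>) act (\<mu> (g i)). \<alpha> (g i) = g i' \<otimes> h))"
  using fixes_induced_imp_coset_perm[OF assms] coset_perm_imp_fixes_induced[OF assms(1,3)] by blast

lemma plec_stab_iff_fibrewise:
  assumes enum: "coset_enum G K d g" and sep: "orbit_separated d g"
    and f: "bij_betw f {..<k} ((\<lambda>i. \<mu> (g i)) ` {..<d})" and \<alpha>: "\<alpha> \<in> plectic G K"
  defines "\<delta> j \<equiv> {i \<in> {..<d}. \<mu> (g i) = f j}"
  shows "\<alpha> \<in> plec_stab G K \<mu> \<longleftrightarrow>
         (\<forall>j<k. \<forall>i\<in>\<delta> j. \<exists>i'\<in>\<delta> j.
            \<exists>h\<in>stabilizer (G\<lparr>carrier := K\<rparr>) act (f j). \<alpha> (g i) = g i' \<otimes> h)"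
proof -
  let ?P = "\<lambda>i x. \<exists>i'<d. \<mu> (g i') = x \<and>
             (\<exists>h\<in>stabilizer (G\<lparr>carrier := K\<rparr>) act x. \<alpha> (g i) = g i' \<otimes> h)"
  have "\<alpha> \<in> plec_stab G K \<mu> \<longleftrightarrow> (\<forall>i\<in>{..<d}. ?P i (\<mu> (g i)))"
    unfolding plec_stab_iff[OF \<alpha>] fixes_induced_iff_coset_perm[OF enum sep \<alpha>] by (simp add: Ball_def)
  also have "\<dots> \<longleftrightarrow> (\<forall>j<k. \<forall>i\<in>\<delta> j. ?P i (f j))"
    unfolding \<delta>_def by (rule fibres_of_enumeration(4)[OF f])
  also have "\<dots> \<longleftrightarrow> (\<forall>j<k. \<forall>i\<in>\<delta> j. \<exists>i'\<in>\<delta> j.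
                 \<exists>h\<in>stabilizer (G\<lparr>carrier := K\<rparr>) act (f j). \<alpha> (g i) = g i' \<otimes> h)"
    unfolding \<delta>_def by (simp add: Bex_def conj_assoc)
  finally show ?thesis .
qed

end

theorem proposition4p2:
  fixes WQ :: "('a, 'b) monoid_scheme"
    and WF :: "'a set" and N :: "'a set"
    and X :: "'x set" and act :: "'a \<Rightarrow> 'x \<Rightarrow> 'x"
    and d :: nat and \<mu> :: "'a \<Rightarrow> 'x"
  assumes "group WQ"
    and "subgroup WF WQ"
    and "finite ((\<lambda>a. a <#\<^bsub>WQ\<^esub> WF) ` carrier WQ)"
    and "d = card ((\<lambda>a. a <#\<^bsub>WQ\<^esub> WF) ` carrier WQ)"
    and "group_action (WQ\<lparr>carrier := WF\<rparr>) X act"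
    and "N \<lhd> WQ\<lparr>carrier := WF\<rparr>"
    and "finite (rcosets\<^bsub>WQ\<lparr>carrier := WF\<rparr>\<^esub> N)"
    and "\<forall>n\<in>N. \<forall>x\<in>X. act n x = x"
    and "\<mu> \<in> induced_set WQ WF act X"
  shows "\<exists>g k (\<delta> :: nat \<Rightarrow> nat set) (W :: nat \<Rightarrow> 'a set).
           coset_enum WQ WF d g \<and>
           (\<forall>j<k. \<delta> j \<noteq> {}) \<and>
           (\<forall>j<k. \<forall>j'<k. j \<noteq> j' \<longrightarrow> \<delta> j \<inter> \<delta> j' = {}) \<and>
           (\<Union>j<k. \<delta> j) = {..<d} \<and>
           (\<forall>j<k. subgroup (W j) (WQ\<lparr>carrier := WF\<rparr>) \<and> N \<subseteq> W j) \<and>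
           (\<forall>\<alpha>\<in>plectic WQ WF.
              \<alpha> \<in> plec_stab WQ WF \<mu> \<longleftrightarrow>
              (\<forall>j<k. \<forall>i\<in>\<delta> j. \<exists>i'\<in>\<delta> j. \<exists>h\<in>W j. \<alpha> (g i) = g i' \<otimes>\<^bsub>WQ\<^esub> h))"
proof -
  interpret induced_action WQ WF X act \<mu>
    using assms(1,2,5,9) by (simp add: induced_action_def induced_action_axioms_def)
  obtain g where enum: "coset_enum WQ WF d g" and sep: "orbit_separated d g"
    using exists_orbit_separated_coset_enum assms(3,4) by blast
  define V where "V = (\<lambda>i. \<mu> (g i)) ` {..<d}"
  obtain k and f :: "nat \<Rightarrow> 'x" where f: "bij_betw f {..<k} V"
    using ex_bij_betw_nat_finite[of V] unfolding V_def by (auto simp: atLeast0LessThan)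
  define \<delta> where "\<delta> j = {i \<in> {..<d}. \<mu> (g i) = f j}" for j
  define W where "W j = stabilizer (WQ\<lparr>carrier := WF\<rparr>) act (f j)" for j
  note fibres = fibres_of_enumeration(1-3)[OF f[unfolded V_def], folded \<delta>_def]
  have "V \<subseteq> X"
    using enum induced_closed unfolding V_def coset_enum_def by auto
  then have "f j \<in> X" if "j < k" for j
    using bij_betw_apply[OF f] that by auto
  moreover have "N \<subseteq> WF"
    using subgroup.subset[OF normal_imp_subgroup[OF assms(6)]] by simp
  ultimately have W: "\<forall>j<k. subgroup (W j) (WQ\<lparr>carrier := WF\<rparr>) \<and> N \<subseteq> W j"
    using group_action.stabilizer_subgroup[OF assms(5)] assms(8) unfolding W_def stabilizer_def by auto
  note stab = plec_stab_iff_fibrewise[OF enum sep f[unfolded V_def], folded \<delta>_def W_def]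
  show ?thesis
    using enum fibres W stab by (intro exI[of _ g] exI[of _ k] exI[of _ \<delta>] exI[of _ W] conjI) auto
qed

end
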